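(* There are no semi-real quaternionic rectifying curves lying fully in $\mathcal{Q}_v$ whose curvatures $\kappa(s)$, $k(s)$ and $(r-\varepsilon_t\varepsilon_T\varepsilon_{N_1}\kappa)(s)$ are all non-zero constants.
   Context: $\mathcal{Q}_v$ denotes the semi-real quaternions, identified with the semi-Euclidean space $\mathbb{R}^4_2$ with inner product $h(p,q)=p_1q_1+p_2q_2-p_3q_3-p_4q_4$. For a unit speed semi-real quaternionic curve $\beta$ (i.e. $h(T,T)=\varepsilon_T=\pm1$, $T=\beta'$) with non-null Serret–Frenet frame $\{T,N_1,N_2,N_3\}$ the Frenet equations are $T'=\varepsilon_{N_1}\kappa N_1$, $N_1'=-\varepsilon_t\varepsilon_{N_1}\kappa T+\varepsilon_{n_1}kN_2$, $N_2'=-\varepsilon_t kN_1+\varepsilon_{n_1}(r-\varepsilon_t\varepsilon_T\varepsilon_{N_1}\kappa)N_3$, $N_3'=-\varepsilon_{n_2}(r-\varepsilon_t\varepsilon_T\varepsilon_{N_1}\kappa)N_2$, where $\kappa$ is the principal curvature of $\beta$, $k$ and $r$ are the curvature and torsion of the associated spatial quaternionic curve in $\mathbb{R}^3_1$ with frame signs $\varepsilon_t,\varepsilon_{n_1},\varepsilon_{n_2}\in\{\pm1\}$, and $h(N_1,N_1)=\varepsilon_{N_1}$, $h(N_2,N_2)=\varepsilon_{n_1}\varepsilon_T$, $h(N_3,N_3)=\varepsilon_{n_2}\varepsilon_T$. $\beta$ is a semi-real quaternionic rectifying curve if $\beta(s)=\lambda(s)T(s)+\mu(s)N_2(s)+\nu(s)N_3(s)$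 for some differentiable functions $\lambda,\mu,\nu$. *)

theory Defs
  imports "HOL-Analysis.Analysis"
begin

text \<open>Semi-real quaternions Q_v identified with semi-Euclidean space R^4_2.\<close>

definition sr_h :: "real^4 \<Rightarrow> real^4 \<Rightarrow> real" where
  "sr_h p q = p$1 * q$1 + p$2 * q$2 - p$3 * q$3 - p$4 * q$4"

definition is_sign :: "real \<Rightarrow> bool" where
  "is_sign e \<longleftrightarrow> e = 1 \<or> e = -1"

text \<open>Unit speed semi-real quaternionic curve beta on the open interval I with
  non-null Serret--Frenet frame {T,N1,N2,N3}, principal curvature kappa, and
  curvature k and torsion r (of the associated spatial quaternionic curve) with
  frame signs et, en1, en2.\<close>

definition sr_frenet_curve ::
  "real set \<Rightarrow> (real \<Rightarrow> real^4) \<Rightarrow> (real \<Rightarrow> real^4) \<Rightarrow> (real \<Rightarrow> real^4) \<Rightarrow>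
   (real \<Rightarrow> real^4) \<Rightarrow> (real \<Rightarrow> real^4) \<Rightarrow> (real \<Rightarrow> real) \<Rightarrow> (real \<Rightarrow> real) \<Rightarrow>
   (real \<Rightarrow> real) \<Rightarrow> real \<Rightarrow> real \<Rightarrow> real \<Rightarrow> real \<Rightarrow> real \<Rightarrow> bool" where
  "sr_frenet_curve I \<beta> T N1 N2 N3 \<kappa> k r eT eN1 et en1 en2 \<longleftrightarrow>
     is_sign eT \<and> is_sign eN1 \<and> is_sign et \<and> is_sign en1 \<and> is_sign en2 \<and>
     (\<forall>s\<in>I.
        (\<beta> has_vector_derivative T s) (at s) \<and>
        sr_h (T s) (T s) = eT \<and>
        sr_h (N1 s) (N1 s) = eN1 \<and>
        sr_h (N2 s) (N2 s) = en1 * eT \<and>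
        sr_h (N3 s) (N3 s) = en2 * eT \<and>
        sr_h (T s) (N1 s) = 0 \<and> sr_h (T s) (N2 s) = 0 \<and> sr_h (T s) (N3 s) = 0 \<and>
        sr_h (N1 s) (N2 s) = 0 \<and> sr_h (N1 s) (N3 s) = 0 \<and> sr_h (N2 s) (N3 s) = 0 \<and>
        (T has_vector_derivative (eN1 * \<kappa> s) *\<^sub>R N1 s) (at s) \<and>
        (N1 has_vector_derivative
           ((- et * eN1 * \<kappa> s) *\<^sub>R T s + (en1 * k s) *\<^sub>R N2 s)) (at s) \<and>
        (N2 has_vector_derivative
           ((- et * k s) *\<^sub>R N1 s
            + (en1 * (r s - et * eT * eN1 * \<kappa> s)) *\<^sub>R N3 s)) (at s) \<and>
        (N3 has_vector_derivative
           ((- en2 * (r s - et * eT * eN1 * \<kappa> s)) *\<^sub>R N2 s)) (at s))"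

definition sr_rectifying ::
  "real set \<Rightarrow> (real \<Rightarrow> real^4) \<Rightarrow> (real \<Rightarrow> real^4) \<Rightarrow> (real \<Rightarrow> real^4) \<Rightarrow>
   (real \<Rightarrow> real^4) \<Rightarrow> bool" where
  "sr_rectifying I \<beta> T N2 N3 \<longleftrightarrow>
     (\<exists>la mu nu :: real \<Rightarrow> real.
        (\<forall>s\<in>I. la differentiable (at s) \<and> mu differentiable (at s) \<and> nu differentiable (at s)) \<and>
        (\<forall>s\<in>I. \<beta> s = la s *\<^sub>R T s + mu s *\<^sub>R N2 s + nu s *\<^sub>R N3 s))"

end

theory Submission
  imports Defs
begin

text \<open>Differentiating \<open>\<beta> = \<lambda> T + \<mu> N\<^sub>2 + \<nu> N\<^sub>3\<close> with the Frenet equations and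
  pairing with the orthonormal frame gives \<open>\<lambda>' = 1\<close>, \<open>\<lambda> \<epsilon>\<^sub>N\<^sub>1 \<kappa> = \<mu> \<epsilon>\<^sub>t k\<close>,
  \<open>\<mu>' = \<epsilon>\<^sub>n\<^sub>2 c \<nu>\<close> and \<open>\<nu>' = -\<epsilon>\<^sub>n\<^sub>1 c \<mu>\<close>, where \<open>c = r - \<epsilon>\<^sub>t \<epsilon>\<^sub>T \<epsilon>\<^sub>N\<^sub>1 \<kappa>\<close>.
  If \<open>\<kappa>\<close>, \<open>k\<close> and \<open>c\<close> are nonzero constants, the second equation makes \<open>\<mu>\<close> a
  multiple \<open>q \<lambda>\<close> with \<open>q \<noteq> 0\<close>, so \<open>\<mu>' = q\<close>; the third then makes \<open>\<nu>\<close> constant,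
  the fourth forces \<open>\<mu> = 0\<close>, and hence \<open>q = \<mu>' = 0\<close>.\<close>

lemma sr_h_add_left: "sr_h (x + y) z = sr_h x z + sr_h y z"
  and sr_h_add_right: "sr_h z (x + y) = sr_h z x + sr_h z y"
  and sr_h_scaleR_left: "sr_h (c *\<^sub>R x) z = c * sr_h x z"
  and sr_h_scaleR_right: "sr_h z (c *\<^sub>R x) = c * sr_h z x"
  by (simp_all add: sr_h_def algebra_simps)

lemma sr_h_commute: "sr_h x y = sr_h y x"
  by (simp add: sr_h_def algebra_simps)

lemmas sr_h_bilinear = sr_h_add_left sr_h_add_right sr_h_scaleR_left sr_h_scaleR_right

lemma deriv_eq_on_open:
  assumes "open I" "s \<in> I" "\<And>x. x \<in> I \<Longrightarrow> f x = g x" "(g has_field_derivative D) (at s)"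
  shows "deriv f s = D"
  using has_field_derivative_transform_within_open[OF assms(4,1,2)] assms(3)
  by (simp add: DERIV_imp_deriv)

lemma sr_h_frame_coordinates_of_first:
  assumes "sr_h t t \<noteq> 0" "sr_h n1 n1 \<noteq> 0" "sr_h n2 n2 \<noteq> 0" "sr_h n3 n3 \<noteq> 0"
    and "sr_h t n1 = 0" "sr_h t n2 = 0" "sr_h t n3 = 0"
    and "sr_h n1 n2 = 0" "sr_h n1 n3 = 0" "sr_h n2 n3 = 0"
    and t_eq: "t = x0 *\<^sub>R t + x1 *\<^sub>R n1 + x2 *\<^sub>R n2 + x3 *\<^sub>R n3"
  shows "x0 = 1" "x1 = 0" "x2 = 0" "x3 = 0"
proof -
  have orth: "sr_h n1 t = 0" "sr_h n2 t = 0" "sr_h n3 t = 0"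
      "sr_h n2 n1 = 0" "sr_h n3 n1 = 0" "sr_h n3 n2 = 0"
    using assms(5-10) sr_h_commute by metis+
  have "sr_h t t = x0 * sr_h t t" "sr_h t n1 = x1 * sr_h n1 n1"
    "sr_h t n2 = x2 * sr_h n2 n2" "sr_h t n3 = x3 * sr_h n3 n3"
    by (subst t_eq, simp add: sr_h_bilinear orth assms(5-10))+
  then show "x0 = 1" "x1 = 0" "x2 = 0" "x3 = 0"
    using assms(1-7) by simp_all
qed

lemma sr_rectifying_tangent_in_frame:
  assumes "open I" "s \<in> I"
    and frenet: "sr_frenet_curve I \<beta> T N1 N2 N3 \<kappa> k r eT eN1 et en1 en2"
    and diff: "\<And>x. x \<in> I \<Longrightarrow> la differentiable (at x) \<and> mu differentiable (at x) \<and> nu differentiable (at x)"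
    and rep: "\<And>x. x \<in> I \<Longrightarrow> \<beta> x = la x *\<^sub>R T x + mu x *\<^sub>R N2 x + nu x *\<^sub>R N3 x"
  defines "c \<equiv> r s - et * eT * eN1 * \<kappa> s"
  shows "T s = deriv la s *\<^sub>R T s + (la s * eN1 * \<kappa> s - mu s * et * k s) *\<^sub>R N1 s
    + (deriv mu s - en2 * c * nu s) *\<^sub>R N2 s + (en1 * c * mu s + deriv nu s) *\<^sub>R N3 s"
    (is "_ = ?V")
proof -
  from frenet \<open>s \<in> I\<close> have F: "(\<beta> has_vector_derivative T s) (at s)"
      "(T has_vector_derivative (eN1 * \<kappa> s) *\<^sub>R N1 s) (at s)"
      "(N2 has_vector_derivative ((- et * k s) *\<^sub>R N1 s + (en1 * c) *\<^sub>R N3 s)) (at s)"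
      "(N3 has_vector_derivative ((- en2 * c) *\<^sub>R N2 s)) (at s)"
    by (auto simp: sr_frenet_curve_def c_def)
  have dla: "(la has_real_derivative deriv la s) (at s)"
    and dmu: "(mu has_real_derivative deriv mu s) (at s)"
    and dnu: "(nu has_real_derivative deriv nu s) (at s)"
    using diff[OF \<open>s \<in> I\<close>] DERIV_deriv_iff_real_differentiable by blast+
  have "((\<lambda>x. la x *\<^sub>R T x + mu x *\<^sub>R N2 x + nu x *\<^sub>R N3 x) has_vector_derivative ?V) (at s)"
  proof (rule has_vector_derivative_eq_rhs)
    show "((\<lambda>x. la x *\<^sub>R T x + mu x *\<^sub>R N2 x + nu x *\<^sub>R N3 x) has_vector_derivative
      (la s *\<^sub>R ((eN1 * \<kappa> s) *\<^sub>R N1 s) + deriv la s *\<^sub>R T s)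
      + (mu s *\<^sub>R ((- et * k s) *\<^sub>R N1 s + (en1 * c) *\<^sub>R N3 s) + deriv mu s *\<^sub>R N2 s)
      + (nu s *\<^sub>R ((- en2 * c) *\<^sub>R N2 s) + deriv nu s *\<^sub>R N3 s)) (at s)"
      by (intro has_vector_derivative_add has_vector_derivative_scaleR dla dmu dnu F(2-4))
  qed (simp add: algebra_simps)
  then have "(\<beta> has_vector_derivative ?V) (at s)"
    by (rule has_vector_derivative_transform_within_open[OF _ \<open>open I\<close> \<open>s \<in> I\<close>])
       (simp add: rep)
  then show ?thesis
    using vector_derivative_unique_at[OF F(1)] by blast
qed

lemma sr_rectifying_coefficient_equations:
  assumes "open I" "s \<in> I"
    and frenet: "sr_frenet_curve I \<beta> T N1 N2 N3 \<kappa> k r eT eN1 et en1 en2"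
    and diff: "\<And>x. x \<in> I \<Longrightarrow> la differentiable (at x) \<and> mu differentiable (at x) \<and> nu differentiable (at x)"
    and "\<And>x. x \<in> I \<Longrightarrow> \<beta> x = la x *\<^sub>R T x + mu x *\<^sub>R N2 x + nu x *\<^sub>R N3 x"
  defines "c \<equiv> r s - et * eT * eN1 * \<kappa> s"
  shows "(la has_real_derivative 1) (at s)"
    and "la s * eN1 * \<kappa> s = mu s * et * k s"
    and "deriv mu s = en2 * c * nu s"
    and "deriv nu s = - en1 * c * mu s"
proof -
  have frame: "sr_h (T s) (T s) \<noteq> 0" "sr_h (N1 s) (N1 s) \<noteq> 0"
      "sr_h (N2 s) (N2 s) \<noteq> 0" "sr_h (N3 s) (N3 s) \<noteq> 0"
      "sr_h (T s) (N1 s) = 0" "sr_h (T s) (N2 s) = 0" "sr_h (T s) (N3 s) = 0"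
      "sr_h (N1 s) (N2 s) = 0" "sr_h (N1 s) (N3 s) = 0" "sr_h (N2 s) (N3 s) = 0"
    using frenet \<open>s \<in> I\<close> by (auto simp: sr_frenet_curve_def is_sign_def)
  note coords = sr_h_frame_coordinates_of_first[OF frame
      sr_rectifying_tangent_in_frame[OF assms(1-5), folded c_def]]
  have "(la has_real_derivative deriv la s) (at s)"
    using diff[OF \<open>s \<in> I\<close>] DERIV_deriv_iff_real_differentiable by blast
  with coords show "(la has_real_derivative 1) (at s)"
    and "la s * eN1 * \<kappa> s = mu s * et * k s"
    and "deriv mu s = en2 * c * nu s" and "deriv nu s = - en1 * c * mu s"
    by (simp_all add: algebra_simps)
qed

lemma constant_coefficient_system_unsolvable:
  fixes la mu nu :: "real \<Rightarrow> real"
  assumes "open I" "I \<noteq> {}" "A \<noteq> 0" "B \<noteq> 0" "C \<noteq> 0" "D \<noteq> 0"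
    and dla: "\<And>s. s \<in> I \<Longrightarrow> (la has_real_derivative 1) (at s)"
    and la_mu: "\<And>s. s \<in> I \<Longrightarrow> A * la s = B * mu s"
    and mu_nu: "\<And>s. s \<in> I \<Longrightarrow> deriv mu s = C * nu s"
    and nu_mu: "\<And>s. s \<in> I \<Longrightarrow> deriv nu s = - D * mu s"
  shows False
proof -
  define q where "q = A / B"
  have "mu s = q * la s" if "s \<in> I" for s
    using la_mu[OF that] \<open>B \<noteq> 0\<close> by (simp add: q_def field_simps)
  then have deriv_mu: "deriv mu s = q" if "s \<in> I" for s
    using deriv_eq_on_open[OF \<open>open I\<close> that, of mu "\<lambda>x. q * la x"] DERIV_cmult[OF dla[OF that]]
    by simp
  have "nu s = q / C" if "s \<in> I" for s
    using mu_nu[OF that] deriv_mu[OF that] \<open>C \<noteq> 0\<close> by (simp add: field_simps)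
  then have deriv_nu: "deriv nu s = 0" if "s \<in> I" for s
    using deriv_eq_on_open[OF \<open>open I\<close> that, of nu "\<lambda>_. q / C"] by simp
  have "mu s = 0" if "s \<in> I" for s
    using nu_mu[OF that] deriv_nu[OF that] \<open>D \<noteq> 0\<close> by simp
  moreover obtain s where "s \<in> I"
    using \<open>I \<noteq> {}\<close> by blast
  ultimately have "deriv mu s = 0"
    using deriv_eq_on_open[OF \<open>open I\<close> \<open>s \<in> I\<close>, of mu "\<lambda>_. 0"] by simp
  with deriv_mu[OF \<open>s \<in> I\<close>] \<open>A \<noteq> 0\<close> \<open>B \<noteq> 0\<close> show False
    by (simp add: q_def)
qed

theorem corollary4p1:
  fixes a b :: real
    and \<beta> T N1 N2 N3 :: "real \<Rightarrow> real^4"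
    and \<kappa> k r :: "real \<Rightarrow> real"
    and eT eN1 et en1 en2 :: real
  assumes "a < b"
    and "sr_frenet_curve {a<..<b} \<beta> T N1 N2 N3 \<kappa> k r eT eN1 et en1 en2"
    and "sr_rectifying {a<..<b} \<beta> T N2 N3"
  shows "\<not> (\<exists>c1 c2 c3. c1 \<noteq> 0 \<and> c2 \<noteq> 0 \<and> c3 \<noteq> 0 \<and>
            (\<forall>s\<in>{a<..<b}. \<kappa> s = c1 \<and> k s = c2 \<and>
                             r s - et * eT * eN1 * \<kappa> s = c3))"
proof
  assume "\<exists>c1 c2 c3. c1 \<noteq> 0 \<and> c2 \<noteq> 0 \<and> c3 \<noteq> 0 \<and>
            (\<forall>s\<in>{a<..<b}. \<kappa> s = c1 \<and> k s = c2 \<and> r s - et * eT * eN1 * \<kappa> s = c3)"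
  then obtain c1 c2 c3 where "c1 \<noteq> 0" "c2 \<noteq> 0" "c3 \<noteq> 0"
    and const: "\<And>s. s \<in> {a<..<b} \<Longrightarrow> \<kappa> s = c1 \<and> k s = c2 \<and> r s - et * eT * eN1 * \<kappa> s = c3"
    by blast
  obtain la mu nu :: "real \<Rightarrow> real" where
    "\<And>s. s \<in> {a<..<b} \<Longrightarrow> la differentiable (at s) \<and> mu differentiable (at s) \<and> nu differentiable (at s)"
    and "\<And>s. s \<in> {a<..<b} \<Longrightarrow> \<beta> s = la s *\<^sub>R T s + mu s *\<^sub>R N2 s + nu s *\<^sub>R N3 s"
    using assms(3) unfolding sr_rectifying_def by blast
  note equations = sr_rectifying_coefficient_equations[OF open_greaterThanLessThan _ assms(2) this]
  have "eN1 * c1 * la s = et * c2 * mu s \<and> deriv mu s = en2 * c3 * nu s \<and>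
      deriv nu s = - (en1 * c3) * mu s" if s: "s \<in> {a<..<b}" for s
  proof -
    from const[OF s] have "\<kappa> s = c1" "k s = c2" and c: "r s - et * eT * eN1 * \<kappa> s = c3"
      by auto
    with equations(2-4)[OF s, unfolded c] show ?thesis
      by (simp add: mult_ac)
  qed
  moreover have "eN1 \<noteq> 0" "et \<noteq> 0" "en1 \<noteq> 0" "en2 \<noteq> 0"
    using assms(2) by (auto simp: sr_frenet_curve_def is_sign_def)
  ultimately show False
    using constant_coefficient_system_unsolvable[of "{a<..<b}" "eN1 * c1" "et * c2" "en2 * c3" "en1 * c3" la mu nu]
      equations(1) \<open>c1 \<noteq> 0\<close> \<open>c2 \<noteq> 0\<close> \<open>c3 \<noteq> 0\<close> \<open>a < b\<close>
    by auto
qed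

end
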